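(* Let $V$ be a real vector space of dimension $m$, $\Gamma$ a finitely generated free abelian dense subgroup of $V$ acting by translations, and $\mathcal C$ a countable $\Gamma$-invariant collection of affine hyperplanes with finitely many $\Gamma$-orbits and normals spanning $V$. Suppose there are $W_1,\dots,W_m\in\mathcal C$ intersecting in a single point $p$ and a subset $A\subset\{1,\dots,m\}$ such that $\Gamma^A$ has infinite index in $\Gamma_A$ (equivalently $\mathrm{rk}\,\Gamma^A<\mathrm{rk}\,\Gamma_A$). Then $\mathcal P$ consists of infinitely many $\Gamma$-orbits.
   Context: $\mathcal P$ is the set of points of $V$ that are $0$-dimensional intersections of $m$ elements of $\mathcal C$. For $A\subset\{1,\dots,m\}$, $W_A=\bigcap_{i\in A}W_i$ (with $W_\emptyset=V$), $A^c=\{1,\dots,m\}\setminus A$, $\Gamma^A\subset\Gamma$ is the stabilizer of $W_A$, and $\Gamma_A=\{x\in V:\exists\gamma\in\Gamma,\ \{x+p\}=W_A\cap(W_{A^c}+\gamma)\}$, which is a group containing $\Gamma^A$. *)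

theory Defs
  imports "HOL-Analysis.Analysis"
begin

definition int_combs :: "'a::real_vector set \<Rightarrow> 'a set" where
  "int_combs S = {(\<Sum>s\<in>S. real_of_int (c s) *\<^sub>R s) | c. True}"

definition fg_free_abelian_subgroup :: "'a::real_vector set \<Rightarrow> bool" where
  "fg_free_abelian_subgroup \<Gamma> \<longleftrightarrow>
     (\<exists>S. finite S \<and> \<Gamma> = int_combs S \<and>
        (\<forall>c. (\<Sum>s\<in>S. real_of_int (c s) *\<^sub>R s) = 0 \<longrightarrow> (\<forall>s\<in>S. c s = 0)))"

definition hyperplane_with_normal :: "'a::real_inner \<Rightarrow> 'a set \<Rightarrow> bool" where
  "hyperplane_with_normal a H \<longleftrightarrow> a \<noteq> 0 \<and> (\<exists>b. H = {x. a \<bullet> x = b})"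

definition affine_hyperplane :: "'a::real_inner set \<Rightarrow> bool" where
  "affine_hyperplane H \<longleftrightarrow> (\<exists>a. hyperplane_with_normal a H)"

definition normals :: "'a::real_inner set set \<Rightarrow> 'a set" where
  "normals C = {a. \<exists>H\<in>C. hyperplane_with_normal a H}"

definition orbit_set :: "'a::real_vector set \<Rightarrow> 'a set \<Rightarrow> 'a set set" where
  "orbit_set \<Gamma> H = {(\<lambda>x. x + \<gamma>) ` H | \<gamma>. \<gamma> \<in> \<Gamma>}"

definition orbit_pt :: "'a::real_vector set \<Rightarrow> 'a \<Rightarrow> 'a set" where
  "orbit_pt \<Gamma> x = {x + \<gamma> | \<gamma>. \<gamma> \<in> \<Gamma>}"

definition pts_P :: "nat \<Rightarrow> 'a set set \<Rightarrow> 'a set" where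
  "pts_P m C = {x. \<exists>U::nat \<Rightarrow> 'a set. (\<forall>i\<in>{1..m}. U i \<in> C) \<and> (\<Inter>i\<in>{1..m}. U i) = {x}}"

text \<open>W_A (with W_{} = V, the empty intersection being UNIV).\<close>
definition W_of :: "(nat \<Rightarrow> 'a set) \<Rightarrow> nat set \<Rightarrow> 'a set" where
  "W_of W A = (\<Inter>i\<in>A. W i)"

definition Gamma_up :: "'a::real_vector set \<Rightarrow> (nat \<Rightarrow> 'a set) \<Rightarrow> nat set \<Rightarrow> 'a set" where
  "Gamma_up \<Gamma> W A = {\<gamma>\<in>\<Gamma>. (\<lambda>x. x + \<gamma>) ` W_of W A = W_of W A}"

definition Gamma_low :: "'a::real_vector set \<Rightarrow> (nat \<Rightarrow> 'a set) \<Rightarrow> nat \<Rightarrow> 'a \<Rightarrow> nat set \<Rightarrow> 'a set" where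
  "Gamma_low \<Gamma> W m p A = {x. \<exists>\<gamma>\<in>\<Gamma>.
      {x + p} = W_of W A \<inter> ((\<lambda>y. y + \<gamma>) ` W_of W ({1..m} - A))}"

definition infinite_index :: "'a::real_vector set \<Rightarrow> 'a set \<Rightarrow> bool" where
  "infinite_index H G \<longleftrightarrow> infinite {(\<lambda>h. x + h) ` H | x. x \<in> G}"

end

theory Submission
  imports Defs
begin

text \<open>For \<open>x \<in> \<Gamma>\<^sub>A\<close> the point \<open>x + p\<close> lies in \<open>\<P>\<close>: it is cut out by the \<open>W\<^sub>i\<close>, \<open>i \<in> A\<close>,
  together with a \<open>\<Gamma>\<close>-translate of the \<open>W\<^sub>i\<close>, \<open>i \<notin> A\<close>. If \<open>x + p\<close> and \<open>z + p\<close> lie in one \<open>\<Gamma>\<close>-orbit, then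
  \<open>z - x \<in> \<Gamma>\<close> is the difference of two points of the affine subspace \<open>W\<^sub>A\<close>, so it stabilises
  \<open>W\<^sub>A\<close> and lies in \<open>\<Gamma>\<^sup>A\<close>; conversely translating by \<open>\<Gamma>\<^sup>A\<close> stays inside \<open>\<Gamma>\<^sub>A\<close> and inside the
  orbit. So the points of \<open>\<Gamma>\<^sub>A\<close> over a fixed orbit form exactly one coset of \<open>\<Gamma>\<^sup>A\<close>, and
  infinitely many cosets force infinitely many orbits.\<close>

lemma int_combs_add:
  assumes "a \<in> int_combs S" "b \<in> int_combs S"
  shows "a + b \<in> int_combs S"
proof -
  obtain c d where "a = (\<Sum>s\<in>S. real_of_int (c s) *\<^sub>R s)" "b = (\<Sum>s\<in>S. real_of_int (d s) *\<^sub>R s)"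
    using assms unfolding int_combs_def by blast
  then have "a + b = (\<Sum>s\<in>S. real_of_int (c s + d s) *\<^sub>R s)"
    by (simp add: sum.distrib[symmetric] scaleR_add_left)
  then show ?thesis
    unfolding int_combs_def by (auto intro!: exI[of _ "\<lambda>s. c s + d s"])
qed

lemma fg_free_abelian_subgroup_add:
  assumes "fg_free_abelian_subgroup \<Gamma>" "a \<in> \<Gamma>" "b \<in> \<Gamma>"
  shows "a + b \<in> \<Gamma>"
  using assms int_combs_add unfolding fg_free_abelian_subgroup_def by blast

lemma affine_hyperplane_imp_affine: "affine_hyperplane H \<Longrightarrow> affine H"
  unfolding affine_hyperplane_def hyperplane_with_normal_def
  using affine_hyperplane by blast

lemma affine_W_of:
  assumes "\<forall>i\<in>A. affine_hyperplane (W i)"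
  shows "affine (W_of W A)"
  using assms affine_hyperplane_imp_affine unfolding W_of_def by (intro affine_Inter) blast

lemma affine_translate_by_diff:
  fixes H :: "'a::real_vector set"
  assumes "affine H" "a \<in> H" "b \<in> H"
  shows "(\<lambda>y. y + (a - b)) ` H = H"
proof
  show "(\<lambda>y. y + (a - b)) ` H \<subseteq> H"
    using mem_affine_3_minus[OF assms(1) _ assms(2,3), of _ 1] by auto
  show "H \<subseteq> (\<lambda>y. y + (a - b)) ` H"
  proof
    fix y assume "y \<in> H"
    then have "y - (a - b) \<in> H"
      using mem_affine_3_minus2[OF assms(1) _ assms(2,3), of _ 1] by auto
    then show "y \<in> (\<lambda>y. y + (a - b)) ` H"
      by (auto simp: image_iff intro!: bexI[of _ "y - (a - b)"])
  qed
qed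

lemma Gamma_low_translate_in_pts_P:
  assumes "A \<subseteq> {1..m}" "\<forall>i\<in>{1..m}. W i \<in> C" "\<forall>H\<in>C. \<forall>\<gamma>\<in>\<Gamma>. (\<lambda>x. x + \<gamma>) ` H \<in> C"
    and "x \<in> Gamma_low \<Gamma> W m p A"
  shows "x + p \<in> pts_P m C"
proof -
  obtain \<gamma> where "\<gamma> \<in> \<Gamma>" and \<gamma>: "{x + p} = W_of W A \<inter> (\<lambda>y. y + \<gamma>) ` W_of W ({1..m} - A)"
    using assms(4) unfolding Gamma_low_def by blast
  define U where "U i = (if i \<in> A then W i else (\<lambda>y. y + \<gamma>) ` W i)" for i
  have U_in: "\<forall>i\<in>{1..m}. U i \<in> C"
    using assms(2,3) \<open>\<gamma> \<in> \<Gamma>\<close> by (auto simp: U_def)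
  have "(\<Inter>i\<in>{1..m}. U i) = (\<Inter>i\<in>A. U i) \<inter> (\<Inter>i\<in>{1..m} - A. U i)"
    using assms(1) INT_Un[where A = A and B = "{1..m} - A" and M = U] by (simp add: Un_absorb1)
  also have "(\<Inter>i\<in>A. U i) = W_of W A"
    by (simp add: U_def W_of_def)
  also have "(\<Inter>i\<in>{1..m} - A. U i) = (\<lambda>y. y + \<gamma>) ` W_of W ({1..m} - A)"
    by (simp add: U_def W_of_def bij_image_INT[OF bij_plus_right])
  finally have "(\<Inter>i\<in>{1..m}. U i) = {x + p}"
    using \<gamma> by simp
  with U_in show ?thesis
    unfolding pts_P_def by blast
qed

lemma Gamma_low_add_Gamma_up:
  assumes "\<forall>a\<in>\<Gamma>. \<forall>b\<in>\<Gamma>. a + b \<in> \<Gamma>"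
    and "x \<in> Gamma_low \<Gamma> W m p A" "h \<in> Gamma_up \<Gamma> W A"
  shows "x + h \<in> Gamma_low \<Gamma> W m p A"
proof -
  obtain \<gamma> where "\<gamma> \<in> \<Gamma>" and \<gamma>: "{x + p} = W_of W A \<inter> (\<lambda>y. y + \<gamma>) ` W_of W ({1..m} - A)"
    using assms(2) unfolding Gamma_low_def by blast
  have "h \<in> \<Gamma>" and h: "(\<lambda>y. y + h) ` W_of W A = W_of W A"
    using assms(3) unfolding Gamma_up_def by auto
  have "{x + h + p} = (\<lambda>y. y + h) ` {x + p}"
    by (simp add: algebra_simps)
  also have "\<dots> = W_of W A \<inter> (\<lambda>y. y + (\<gamma> + h)) ` W_of W ({1..m} - A)"
    unfolding \<gamma> image_Int[OF bij_is_inj[OF bij_plus_right]] h image_image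
    by (simp add: add.assoc)
  finally show ?thesis
    using assms(1) \<open>\<gamma> \<in> \<Gamma>\<close> \<open>h \<in> \<Gamma>\<close> unfolding Gamma_low_def by blast
qed

lemma Gamma_low_diff_in_Gamma_up:
  assumes "affine (W_of W A)"
    and "x \<in> Gamma_low \<Gamma> W m p A" "z \<in> Gamma_low \<Gamma> W m p A" "z - x \<in> \<Gamma>"
  shows "z - x \<in> Gamma_up \<Gamma> W A"
proof -
  have "x + p \<in> W_of W A" "z + p \<in> W_of W A"
    using assms(2,3) unfolding Gamma_low_def by blast+
  from affine_translate_by_diff[OF assms(1) this(2,1)]
  show ?thesis
    using assms(4) unfolding Gamma_up_def by simp
qed

lemma Gamma_low_orbit_fibre:
  assumes "\<forall>a\<in>\<Gamma>. \<forall>b\<in>\<Gamma>. a + b \<in> \<Gamma>" "affine (W_of W A)"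
    and "x \<in> Gamma_low \<Gamma> W m p A"
  shows "{z \<in> Gamma_low \<Gamma> W m p A. z + p \<in> orbit_pt \<Gamma> (x + p)} = (\<lambda>h. x + h) ` Gamma_up \<Gamma> W A"
proof (intro equalityI subsetI)
  fix z assume "z \<in> {z \<in> Gamma_low \<Gamma> W m p A. z + p \<in> orbit_pt \<Gamma> (x + p)}"
  then have "z \<in> Gamma_low \<Gamma> W m p A" "z - x \<in> \<Gamma>"
    unfolding orbit_pt_def by (auto simp: algebra_simps)
  then have "z - x \<in> Gamma_up \<Gamma> W A"
    using Gamma_low_diff_in_Gamma_up[OF assms(2,3)] by blast
  then show "z \<in> (\<lambda>h. x + h) ` Gamma_up \<Gamma> W A"
    by (auto simp: image_iff intro!: bexI[of _ "z - x"])
next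
  fix z assume "z \<in> (\<lambda>h. x + h) ` Gamma_up \<Gamma> W A"
  then obtain h where "h \<in> Gamma_up \<Gamma> W A" "z = x + h"
    by blast
  moreover have "h \<in> \<Gamma>"
    using \<open>h \<in> Gamma_up \<Gamma> W A\<close> unfolding Gamma_up_def by blast
  ultimately show "z \<in> {z \<in> Gamma_low \<Gamma> W m p A. z + p \<in> orbit_pt \<Gamma> (x + p)}"
    using Gamma_low_add_Gamma_up[OF assms(1,3)] unfolding orbit_pt_def
    by (auto simp: algebra_simps)
qed

theorem mainTheorem7:
  fixes \<Gamma> :: "'a::euclidean_space set"
    and C :: "'a set set"
    and m :: nat
    and W :: "nat \<Rightarrow> 'a set"
    and p :: 'a
    and A :: "nat set"
  assumes dim: "DIM('a) = m"
    and Gamma_fg: "fg_free_abelian_subgroup \<Gamma>"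
    and Gamma_dense: "closure \<Gamma> = UNIV"
    and C_hyp: "\<forall>H\<in>C. affine_hyperplane H"
    and C_countable: "countable C"
    and C_inv: "\<forall>H\<in>C. \<forall>\<gamma>\<in>\<Gamma>. (\<lambda>x. x + \<gamma>) ` H \<in> C"
    and C_orbits: "finite {orbit_set \<Gamma> H | H. H \<in> C}"
    and C_normals: "span (normals C) = UNIV"
    and W_in: "\<forall>i\<in>{1..m}. W i \<in> C"
    and W_point: "(\<Inter>i\<in>{1..m}. W i) = {p}"
    and A_sub: "A \<subseteq> {1..m}"
    and A_index: "infinite_index (Gamma_up \<Gamma> W A) (Gamma_low \<Gamma> W m p A)"
  shows "infinite {orbit_pt \<Gamma> x | x. x \<in> pts_P m C}"
proof
  assume finite_orbits: "finite {orbit_pt \<Gamma> x | x. x \<in> pts_P m C}"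
  define fibre where "fibre Q = {z \<in> Gamma_low \<Gamma> W m p A. z + p \<in> Q}" for Q
  have add_closed: "\<forall>a\<in>\<Gamma>. \<forall>b\<in>\<Gamma>. a + b \<in> \<Gamma>"
    using fg_free_abelian_subgroup_add[OF Gamma_fg] by blast
  have W_A_affine: "affine (W_of W A)"
    using C_hyp W_in A_sub by (intro affine_W_of) blast
  have "(\<lambda>h. x + h) ` Gamma_up \<Gamma> W A \<in> fibre ` {orbit_pt \<Gamma> y | y. y \<in> pts_P m C}"
    if "x \<in> Gamma_low \<Gamma> W m p A" for x
  proof -
    have "fibre (orbit_pt \<Gamma> (x + p)) = (\<lambda>h. x + h) ` Gamma_up \<Gamma> W A"
      unfolding fibre_def by (rule Gamma_low_orbit_fibre[OF add_closed W_A_affine that])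
    moreover have "orbit_pt \<Gamma> (x + p) \<in> {orbit_pt \<Gamma> y | y. y \<in> pts_P m C}"
      using Gamma_low_translate_in_pts_P[OF A_sub W_in C_inv that] by blast
    ultimately show ?thesis
      by (auto intro: image_eqI)
  qed
  then have "{(\<lambda>h. x + h) ` Gamma_up \<Gamma> W A | x. x \<in> Gamma_low \<Gamma> W m p A}
      \<subseteq> fibre ` {orbit_pt \<Gamma> x | x. x \<in> pts_P m C}"
    by blast
  moreover have "finite (fibre ` {orbit_pt \<Gamma> x | x. x \<in> pts_P m C})"
    using finite_orbits by (rule finite_imageI)
  ultimately have "finite {(\<lambda>h. x + h) ` Gamma_up \<Gamma> W A | x. x \<in> Gamma_low \<Gamma> W m p A}"
    by (rule finite_subset)
  with A_index show False
    unfolding infinite_index_def by simp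
qed

end
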